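(* Let $\mathbf X$ be a design with centered and scaled matrix $\mathbf F$, let $\boldsymbol\beta\in\mathbb R^p$ have support $\mathcal A$ and sign vector $\boldsymbol z$, let $\lambda>0$, and assume $\mathbf C_{\mathcal A}$ is invertible. Then \[ \phi_\lambda(\mathbf X\mid\boldsymbol\beta)=P(S_\lambda\mid\mathbf F_{\mathcal A},\boldsymbol\beta_{\mathcal A})\times P(I_\lambda\mid\mathbf F,\boldsymbol z)=\phi_\lambda(\mathbf X\mid-\boldsymbol\beta), \] and consequently any design $\mathbf X^*$ that maximizes $\phi_\lambda(\cdot\mid\boldsymbol\beta)$ over all designs also maximizes $\phi_\lambda(\cdot\mid-\boldsymbol\beta)$.
   Context: A design is an $n\times p$ matrix $\mathbf X$ with entries in $\{-1,+1\}$. Let $\mathbf P_1=n^{-1}\mathbf 1\mathbf 1^T$, let $\mathbf V$ be the diagonal matrix whose diagonal entries are those of $n^{-1}\mathbf X^T(\mathbf I-\mathbf P_1)\mathbf X$, let $\mathbf F=(\mathbf I-\mathbf P_1)\mathbf X\mathbf V^{-1/2}$ and $\mathbf C=n^{-1}\mathbf F^T\mathbf F$. For $\boldsymbol\beta\in\mathbb R^p$, its support is $\mathcal A=\{j:\beta_j\neq0\}$ with $|\mathcal A|=k\ge1$, $\mathcal I$ is the complement of $\mathcal A$ in $\{1,\dots,p\}$, $\boldsymbol z=\mathrm{sign}(\boldsymbol\beta)$ componentwise, and $\mathbf Z_{\mathcal A}=\mathrm{Diag}(\boldsymbol z_{\mathcal A})$. For index sets $\mathcal U,\mathcal T$: $\mathbf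 F_{\mathcal T}$ is the submatrix of columns in $\mathcal T$, $\boldsymbol w_{\mathcal T}$ the subvector of a vector, $\mathbf M_{\mathcal U\mathcal T}$ the submatrix of a $p\times p$ matrix with rows $\mathcal U$ and columns $\mathcal T$, and $\mathbf M_{\mathcal T}=\mathbf M_{\mathcal T\mathcal T}$. Designs considered are those with $\mathbf C_{\mathcal A}$ invertible and positive diagonal of $\mathbf V_{\mathcal A}$. Let $\mathbf P_{\mathcal A}=\mathbf F_{\mathcal A}(\mathbf F_{\mathcal A}^T\mathbf F_{\mathcal A})^{-1}\mathbf F_{\mathcal A}^T$, $\lambda>0$, $\lambda_n=\lambda\sqrt n$, and $\boldsymbol e\sim N(\mathbf 0,\mathbf I_n)$. Define $\boldsymbol u=-n^{-1/2}\mathbf Z_{\mathcal A}\mathbf C_{\mathcal A}^{-1}\mathbf F_{\mathcal A}^T\boldsymbol e+\lambda_n\mathbf Z_{\mathcal A}\mathbf C_{\mathcal A}^{-1}\boldsymbol z_{\mathcal A}$ and $\boldsymbol v=n^{-1/2}\mathbf F_{\mathcal I}^T(\mathbf I-\mathbf P_{\mathcal A})\boldsymbol e+\lambda_n\mathbf C_{\mathcal I\mathcal A}\mathbf C_{\mathcal A}^{-1}\boldsymbol z_{\mathcal A}$, and the events $S_\lambda=\{\boldsymbol u<\sqrt n\,\mathbf Z_{\mathcal A}\mathbf V_{\mathcal A}^{1/2}\boldsymbol\beta_{\mathcal A}\}$ (componentwise) and $I_\lambda=\{|\boldsymbol v|\le\lambda_n\mathbf 1\}$ (componentwise; the sure event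 if $\mathcal I=\emptyset$). Their probabilities are written $P(S_\lambda\mid\mathbf F_{\mathcal A},\boldsymbol\beta_{\mathcal A})$ and $P(I_\lambda\mid\mathbf F,\boldsymbol z)$. The sign recovery criterion is $\phi_\lambda(\mathbf X\mid\boldsymbol\beta)=P(S_\lambda\cap I_\lambda)$ (these events encode the KKT conditions under which the lasso on $\mathbf F$ recovers the sign vector $\boldsymbol z$ of $\boldsymbol\beta$ in the model $\boldsymbol y=\beta_0\mathbf 1+\mathbf X\boldsymbol\beta+\boldsymbol e$). *)

theory Defs
  imports "HOL-Probability.Probability"
begin

text \<open>A design is an n x p matrix represented as a function
  X :: nat => nat => real, rows indexed by {..<n}, columns by {..<p}.
  Vectors in R^p are functions nat => real on {..<p}.  Matrices indexed
  by a finite index set T are functions nat => nat => real restricted to T x T.\<close>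

definition mat_invertible_on :: "nat set \<Rightarrow> (nat \<Rightarrow> nat \<Rightarrow> real) \<Rightarrow> bool" where
  "mat_invertible_on T M \<longleftrightarrow> (\<exists>N. (\<forall>i\<in>T. \<forall>j\<in>T. (\<Sum>k\<in>T. M i k * N k j) = (if i = j then 1 else 0))
                                  \<and> (\<forall>i\<in>T. \<forall>j\<in>T. (\<Sum>k\<in>T. N i k * M k j) = (if i = j then 1 else 0)))"

definition mat_inv_on :: "nat set \<Rightarrow> (nat \<Rightarrow> nat \<Rightarrow> real) \<Rightarrow> (nat \<Rightarrow> nat \<Rightarrow> real)" where
  "mat_inv_on T M = (SOME N. (\<forall>i\<in>T. \<forall>j\<in>T. (\<Sum>k\<in>T. M i k * N k j) = (if i = j then 1 else 0))
                                  \<and> (\<forall>i\<in>T. \<forall>j\<in>T. (\<Sum>k\<in>T. N i k * M k j) = (if i = j then 1 else 0)))"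

text \<open>(I - P_1) X\<close>
definition Xc :: "nat \<Rightarrow> (nat \<Rightarrow> nat \<Rightarrow> real) \<Rightarrow> nat \<Rightarrow> nat \<Rightarrow> real" where
  "Xc n X i j = X i j - (1 / real n) * (\<Sum>i'<n. X i' j)"

text \<open>diagonal of n^{-1} X^T (I - P_1) X\<close>
definition Vd :: "nat \<Rightarrow> (nat \<Rightarrow> nat \<Rightarrow> real) \<Rightarrow> nat \<Rightarrow> real" where
  "Vd n X j = (1 / real n) * (\<Sum>i<n. X i j * Xc n X i j)"

text \<open>F = (I - P_1) X V^{-1/2}\<close>
definition Fm :: "nat \<Rightarrow> (nat \<Rightarrow> nat \<Rightarrow> real) \<Rightarrow> nat \<Rightarrow> nat \<Rightarrow> real" where
  "Fm n X i j = Xc n X i j / sqrt (Vd n X j)"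

text \<open>C = n^{-1} F^T F\<close>
definition Cm :: "nat \<Rightarrow> (nat \<Rightarrow> nat \<Rightarrow> real) \<Rightarrow> nat \<Rightarrow> nat \<Rightarrow> real" where
  "Cm n X j k = (1 / real n) * (\<Sum>i<n. Fm n X i j * Fm n X i k)"

definition supp :: "nat \<Rightarrow> (nat \<Rightarrow> real) \<Rightarrow> nat set" where
  "supp p \<beta> = {j. j < p \<and> \<beta> j \<noteq> 0}"

definition inact :: "nat \<Rightarrow> (nat \<Rightarrow> real) \<Rightarrow> nat set" where
  "inact p \<beta> = {..<p} - supp p \<beta>"

definition sgnv :: "(nat \<Rightarrow> real) \<Rightarrow> nat \<Rightarrow> real" where
  "sgnv \<beta> j = sgn (\<beta> j)"

definition design :: "nat \<Rightarrow> nat \<Rightarrow> (nat \<Rightarrow> real) \<Rightarrow> (nat \<Rightarrow> nat \<Rightarrow> real) \<Rightarrow> bool" where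
  "design n p \<beta> X \<longleftrightarrow> (\<forall>i<n. \<forall>j<p. X i j = 1 \<or> X i j = -1)
      \<and> mat_invertible_on (supp p \<beta>) (Cm n X)
      \<and> (\<forall>j\<in>supp p \<beta>. Vd n X j > 0)"

text \<open>Law of e ~ N(0, I_n), as the product of n standard normals.\<close>
definition gauss :: "nat \<Rightarrow> (nat \<Rightarrow> real) measure" where
  "gauss n = PiM {..<n} (\<lambda>_. density lborel std_normal_density)"

text \<open>P_A = F_A (F_A^T F_A)^{-1} F_A^T\<close>
definition PA :: "nat \<Rightarrow> nat \<Rightarrow> (nat \<Rightarrow> real) \<Rightarrow> (nat \<Rightarrow> nat \<Rightarrow> real) \<Rightarrow> nat \<Rightarrow> nat \<Rightarrow> real" where
  "PA n p \<beta> X i i' =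
     (let A = supp p \<beta>; G = mat_inv_on A (\<lambda>j k. \<Sum>l<n. Fm n X l j * Fm n X l k)
      in \<Sum>j\<in>A. \<Sum>k\<in>A. Fm n X i j * G j k * Fm n X i' k)"

text \<open>u (components indexed by A)\<close>
definition uvec :: "nat \<Rightarrow> nat \<Rightarrow> real \<Rightarrow> (nat \<Rightarrow> real) \<Rightarrow> (nat \<Rightarrow> nat \<Rightarrow> real) \<Rightarrow> (nat \<Rightarrow> real) \<Rightarrow> nat \<Rightarrow> real" where
  "uvec n p lam \<beta> X e j =
     (let A = supp p \<beta>; z = sgnv \<beta>; Ci = mat_inv_on A (Cm n X)
      in - (1 / sqrt (real n)) * z j * (\<Sum>k\<in>A. Ci j k * (\<Sum>i<n. Fm n X i k * e i))
         + lam * sqrt (real n) * z j * (\<Sum>k\<in>A. Ci j k * z k))"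

text \<open>v (components indexed by I)\<close>
definition vvec :: "nat \<Rightarrow> nat \<Rightarrow> real \<Rightarrow> (nat \<Rightarrow> real) \<Rightarrow> (nat \<Rightarrow> nat \<Rightarrow> real) \<Rightarrow> (nat \<Rightarrow> real) \<Rightarrow> nat \<Rightarrow> real" where
  "vvec n p lam \<beta> X e j =
     (let A = supp p \<beta>; z = sgnv \<beta>; Ci = mat_inv_on A (Cm n X)
      in (1 / sqrt (real n)) * (\<Sum>i<n. Fm n X i j * (e i - (\<Sum>i'<n. PA n p \<beta> X i i' * e i')))
         + lam * sqrt (real n) * (\<Sum>k\<in>A. Cm n X j k * (\<Sum>l\<in>A. Ci k l * z l)))"

definition S_event :: "nat \<Rightarrow> nat \<Rightarrow> real \<Rightarrow> (nat \<Rightarrow> real) \<Rightarrow> (nat \<Rightarrow> nat \<Rightarrow> real) \<Rightarrow> (nat \<Rightarrow> real) set" where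
  "S_event n p lam \<beta> X = {e \<in> space (gauss n). \<forall>j\<in>supp p \<beta>.
      uvec n p lam \<beta> X e j < sqrt (real n) * sgnv \<beta> j * sqrt (Vd n X j) * \<beta> j}"

definition I_event :: "nat \<Rightarrow> nat \<Rightarrow> real \<Rightarrow> (nat \<Rightarrow> real) \<Rightarrow> (nat \<Rightarrow> nat \<Rightarrow> real) \<Rightarrow> (nat \<Rightarrow> real) set" where
  "I_event n p lam \<beta> X = {e \<in> space (gauss n). \<forall>j\<in>inact p \<beta>.
      \<bar>vvec n p lam \<beta> X e j\<bar> \<le> lam * sqrt (real n)}"

text \<open>Sign recovery criterion phi_lambda(X | beta)\<close>
definition phi :: "nat \<Rightarrow> nat \<Rightarrow> real \<Rightarrow> (nat \<Rightarrow> nat \<Rightarrow> real) \<Rightarrow> (nat \<Rightarrow> real) \<Rightarrow> real" where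
  "phi n p lam X \<beta> = measure (gauss n) (S_event n p lam \<beta> X \<inter> I_event n p lam \<beta> X)"

end

theory Submission
  imports Defs
begin

text \<open>
  The event \<open>S\<^sub>\<lambda>\<close> depends on the noise \<open>e\<close> only through \<open>F\<^sub>\<A>\<^sup>T e\<close>, and \<open>I\<^sub>\<lambda>\<close> only
  through \<open>(I - P\<^sub>\<A>) e\<close>, which does not change when \<open>e\<close> moves in the column space of \<open>F\<^sub>\<A>\<close>.
  Take an orthogonal matrix \<open>M\<close> whose first \<open>k = |\<A>|\<close> columns span this column space and whose
  other columns are orthogonal to it, built as a product of Givens rotations. A planar rotation
  is a composition of shears and a squeeze, which preserve Lebesgue measure, and the planar
  Gaussian density is radial; so every Givens rotation, and hence \<open>M\<close>, preserves the law of \<open>e\<close>.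
  Writing \<open>e = M y\<close> with \<open>y\<close> standard Gaussian, \<open>S\<^sub>\<lambda>\<close> depends only on \<open>y\<^sub>0, \<dots>, y\<^sub>k\<^sub>-\<^sub>1\<close> and
  \<open>I\<^sub>\<lambda>\<close> only on the remaining coordinates, so the two events are independent. Finally, the
  KKT events for \<open>-\<beta>\<close> are those for \<open>\<beta>\<close> evaluated at \<open>-e\<close>, which has the same law as \<open>e\<close>.
\<close>

subsection \<open>Rotation invariance of the planar standard Gaussian\<close>

lemma nn_integral_lborel_shear_fst:
  fixes f :: "real \<Rightarrow> real \<Rightarrow> ennreal"
  assumes [measurable]: "(\<lambda>(x, y). f x y) \<in> borel_measurable (borel \<Otimes>\<^sub>M borel)"
  shows "(\<integral>\<^sup>+x. \<integral>\<^sup>+y. f (x + a * y) y \<partial>lborel \<partial>lborel) = (\<integral>\<^sup>+x. \<integral>\<^sup>+y. f x y \<partial>lborel \<partial>lborel)"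
proof -
  have "(\<integral>\<^sup>+x. \<integral>\<^sup>+y. f (x + a * y) y \<partial>lborel \<partial>lborel) = (\<integral>\<^sup>+y. \<integral>\<^sup>+x. f (x + a * y) y \<partial>lborel \<partial>lborel)"
    by (rule lborel_pair.Fubini') measurable
  also have "\<dots> = (\<integral>\<^sup>+y. \<integral>\<^sup>+x. f x y \<partial>lborel \<partial>lborel)"
  proof (rule nn_integral_cong)
    fix y :: real
    show "(\<integral>\<^sup>+x. f (x + a * y) y \<partial>lborel) = (\<integral>\<^sup>+x. f x y \<partial>lborel)"
      using nn_integral_real_affine[where c=1 and t="a * y" and f="\<lambda>x. f x y"]
      by (simp add: add.commute)
  qed
  also have "\<dots> = (\<integral>\<^sup>+x. \<integral>\<^sup>+y. f x y \<partial>lborel \<partial>lborel)"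
    by (rule lborel_pair.Fubini'[symmetric]) measurable
  finally show ?thesis .
qed

lemma nn_integral_lborel_shear_snd:
  fixes f :: "real \<Rightarrow> real \<Rightarrow> ennreal"
  assumes [measurable]: "(\<lambda>(x, y). f x y) \<in> borel_measurable (borel \<Otimes>\<^sub>M borel)"
  shows "(\<integral>\<^sup>+x. \<integral>\<^sup>+y. f x (y + a * x) \<partial>lborel \<partial>lborel) = (\<integral>\<^sup>+x. \<integral>\<^sup>+y. f x y \<partial>lborel \<partial>lborel)"
proof (rule nn_integral_cong)
  fix x :: real
  show "(\<integral>\<^sup>+y. f x (y + a * x) \<partial>lborel) = (\<integral>\<^sup>+y. f x y \<partial>lborel)"
    using nn_integral_real_affine[where c=1 and t="a * x" and f="\<lambda>y. f x y"]
    by (simp add: add.commute)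
qed

lemma nn_integral_lborel_squeeze:
  fixes f :: "real \<Rightarrow> real \<Rightarrow> ennreal"
  assumes [measurable]: "(\<lambda>(x, y). f x y) \<in> borel_measurable (borel \<Otimes>\<^sub>M borel)" and "c \<noteq> 0"
  shows "(\<integral>\<^sup>+x. \<integral>\<^sup>+y. f (c * x) (y / c) \<partial>lborel \<partial>lborel) = (\<integral>\<^sup>+x. \<integral>\<^sup>+y. f x y \<partial>lborel \<partial>lborel)"
proof -
  have inner: "(\<integral>\<^sup>+y. f x (y / c) \<partial>lborel) = \<bar>c\<bar> * (\<integral>\<^sup>+y. f x y \<partial>lborel)" for x
    using nn_integral_real_affine[where c=c and t=0 and f="\<lambda>y. f x (y / c)"] \<open>c \<noteq> 0\<close> by simp
  have "(\<integral>\<^sup>+x. \<integral>\<^sup>+y. f (c * x) (y / c) \<partial>lborel \<partial>lborel)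
      = \<bar>c\<bar> * (\<integral>\<^sup>+x. (\<integral>\<^sup>+y. f (0 + c * x) y \<partial>lborel) \<partial>lborel)"
    by (simp add: inner nn_integral_cmult)
  also have "\<dots> = (\<integral>\<^sup>+x. \<integral>\<^sup>+y. f x y \<partial>lborel \<partial>lborel)"
    by (rule nn_integral_real_affine[symmetric]) (use \<open>c \<noteq> 0\<close> in measurable)
  finally show ?thesis .
qed

text \<open>A rotation with nonzero cosine is a shear, followed by a squeeze, followed by a shear.\<close>

lemma nn_integral_lborel_rotation_cos_nonzero:
  fixes f :: "real \<Rightarrow> real \<Rightarrow> ennreal"
  assumes [measurable]: "(\<lambda>(x, y). f x y) \<in> borel_measurable (borel \<Otimes>\<^sub>M borel)"
    and cs: "c\<^sup>2 + s\<^sup>2 = 1" and c: "c \<noteq> 0"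
  shows "(\<integral>\<^sup>+x. \<integral>\<^sup>+y. f (c * x - s * y) (s * x + c * y) \<partial>lborel \<partial>lborel)
       = (\<integral>\<^sup>+x. \<integral>\<^sup>+y. f x y \<partial>lborel \<partial>lborel)"
proof -
  define g where "g x y = f x (y + (s / c) * x)" for x y
  have [measurable]: "(\<lambda>(x, y). g x y) \<in> borel_measurable (borel \<Otimes>\<^sub>M borel)"
    unfolding g_def by measurable
  have decompose: "f (c * x - s * y) (s * x + c * y) = g (c * (x + (- s / c) * y)) (y / c)" for x y
  proof -
    have shear: "c * (x + (- s / c) * y) = c * x - s * y"
      using c by (simp add: field_simps)
    have "y / c + s / c * (c * x - s * y) = s * x + y * (1 - s\<^sup>2) / c"
      using c by (simp add: field_simps power2_eq_square)
    also have "1 - s\<^sup>2 = c\<^sup>2"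
      using cs by simp
    finally have "y / c + s / c * (c * x - s * y) = s * x + c * y"
      using c by (simp add: power2_eq_square)
    then show ?thesis
      unfolding g_def shear by simp
  qed
  have "(\<integral>\<^sup>+x. \<integral>\<^sup>+y. f (c * x - s * y) (s * x + c * y) \<partial>lborel \<partial>lborel)
      = (\<integral>\<^sup>+x. \<integral>\<^sup>+y. g (c * (x + (- s / c) * y)) (y / c) \<partial>lborel \<partial>lborel)"
    by (simp only: decompose)
  also have "\<dots> = (\<integral>\<^sup>+x. \<integral>\<^sup>+y. g (c * x) (y / c) \<partial>lborel \<partial>lborel)"
    by (rule nn_integral_lborel_shear_fst[where f="\<lambda>x y. g (c * x) (y / c)"]) measurable
  also have "\<dots> = (\<integral>\<^sup>+x. \<integral>\<^sup>+y. g x y \<partial>lborel \<partial>lborel)"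
    by (rule nn_integral_lborel_squeeze[OF _ c]) measurable
  also have "\<dots> = (\<integral>\<^sup>+x. \<integral>\<^sup>+y. f x y \<partial>lborel \<partial>lborel)"
    unfolding g_def by (rule nn_integral_lborel_shear_snd) measurable
  finally show ?thesis .
qed

text \<open>A rotation with zero cosine is the square of a rotation with nonzero cosine.\<close>

lemma nn_integral_lborel_rotation:
  fixes f :: "real \<Rightarrow> real \<Rightarrow> ennreal"
  assumes [measurable]: "(\<lambda>(x, y). f x y) \<in> borel_measurable (borel \<Otimes>\<^sub>M borel)"
    and cs: "c\<^sup>2 + s\<^sup>2 = 1"
  shows "(\<integral>\<^sup>+x. \<integral>\<^sup>+y. f (c * x - s * y) (s * x + c * y) \<partial>lborel \<partial>lborel)
       = (\<integral>\<^sup>+x. \<integral>\<^sup>+y. f x y \<partial>lborel \<partial>lborel)"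
proof (cases "c = 0")
  case False
  then show ?thesis by (rule nn_integral_lborel_rotation_cos_nonzero[OF assms])
next
  case True
  then have s2: "s\<^sup>2 = 1" using cs by simp
  define c' :: real where "c' = 1 / sqrt 2"
  define s' :: real where "s' = s / sqrt 2"
  have c'2: "c'\<^sup>2 = 1 / 2" and s'2: "s'\<^sup>2 = 1 / 2"
    unfolding c'_def s'_def using s2 by (simp_all add: power_divide)
  have cs': "c'\<^sup>2 + s'\<^sup>2 = 1" and c': "c' \<noteq> 0"
    using c'2 s'2 by (simp_all add: c'_def)
  have double: "2 * c' * s' = s" unfolding c'_def s'_def by simp
  define h where "h x y = f (c' * x - s' * y) (s' * x + c' * y)" for x y
  have [measurable]: "(\<lambda>(x, y). h x y) \<in> borel_measurable (borel \<Otimes>\<^sub>M borel)"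
    unfolding h_def by measurable
  have square: "f (c * x - s * y) (s * x + c * y) = h (c' * x - s' * y) (s' * x + c' * y)" for x y
  proof -
    have "c' * (c' * x - s' * y) - s' * (s' * x + c' * y) = (c'\<^sup>2 - s'\<^sup>2) * x - (2 * c' * s') * y"
      "s' * (c' * x - s' * y) + c' * (s' * x + c' * y) = (2 * c' * s') * x + (c'\<^sup>2 - s'\<^sup>2) * y"
      by (simp_all add: algebra_simps power2_eq_square)
    then show ?thesis
      unfolding h_def c'2 s'2 double True by simp
  qed
  have "(\<integral>\<^sup>+x. \<integral>\<^sup>+y. h (c' * x - s' * y) (s' * x + c' * y) \<partial>lborel \<partial>lborel)
      = (\<integral>\<^sup>+x. \<integral>\<^sup>+y. h x y \<partial>lborel \<partial>lborel)"
    by (rule nn_integral_lborel_rotation_cos_nonzero[OF _ cs' c']) measurable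
  also have "\<dots> = (\<integral>\<^sup>+x. \<integral>\<^sup>+y. f x y \<partial>lborel \<partial>lborel)"
    unfolding h_def by (rule nn_integral_lborel_rotation_cos_nonzero[OF _ cs' c']) measurable
  finally show ?thesis unfolding square .
qed

lemma std_normal_density_rotation:
  assumes "c\<^sup>2 + s\<^sup>2 = 1"
  shows "std_normal_density (c * x - s * y) * std_normal_density (s * x + c * y)
       = std_normal_density x * std_normal_density y"
proof -
  have "(c * x - s * y)\<^sup>2 + (s * x + c * y)\<^sup>2 = (c\<^sup>2 + s\<^sup>2) * (x\<^sup>2 + y\<^sup>2)"
    by (simp add: algebra_simps power2_eq_square)
  then have radius: "(c * x - s * y)\<^sup>2 + (s * x + c * y)\<^sup>2 = x\<^sup>2 + y\<^sup>2"
    using assms by simp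
  have "std_normal_density a * std_normal_density b = (1 / sqrt (2 * pi))\<^sup>2 * exp (- (a\<^sup>2 + b\<^sup>2) / 2)"
    for a b
    unfolding std_normal_density_def
    by (simp add: power2_eq_square exp_add[symmetric] add_divide_distrib diff_divide_distrib)
  then show ?thesis
    using radius by simp
qed

abbreviation std_normal :: "real measure" where
  "std_normal \<equiv> density lborel (\<lambda>x. ennreal (std_normal_density x))"

lemma prob_space_std_normal: "prob_space std_normal"
  using prob_space_normal_density by simp

lemma nn_integral_std_normal_rotation:
  fixes f :: "real \<Rightarrow> real \<Rightarrow> ennreal"
  assumes [measurable]: "(\<lambda>(x, y). f x y) \<in> borel_measurable (borel \<Otimes>\<^sub>M borel)"
    and cs: "c\<^sup>2 + s\<^sup>2 = 1"
  shows "(\<integral>\<^sup>+x. \<integral>\<^sup>+y. f (c * x - s * y) (s * x + c * y) \<partial>std_normal \<partial>std_normal)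
       = (\<integral>\<^sup>+x. \<integral>\<^sup>+y. f x y \<partial>std_normal \<partial>std_normal)"
proof -
  define \<phi> where "\<phi> x y = ennreal (std_normal_density x) * ennreal (std_normal_density y)" for x y
  have to_lborel: "(\<integral>\<^sup>+x. \<integral>\<^sup>+y. g x y \<partial>std_normal \<partial>std_normal)
      = (\<integral>\<^sup>+x. \<integral>\<^sup>+y. \<phi> x y * g x y \<partial>lborel \<partial>lborel)"
    if [measurable]: "(\<lambda>(x, y). g x y) \<in> borel_measurable (borel \<Otimes>\<^sub>M borel)" for g
    by (simp add: \<phi>_def nn_integral_density nn_integral_cmult[symmetric] mult.assoc)
  have \<phi>_rotation: "\<phi> (c * x - s * y) (s * x + c * y) = \<phi> x y" for x y
    using std_normal_density_rotation[OF cs]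
    by (simp add: \<phi>_def ennreal_mult'[symmetric] ennreal_mult[symmetric])
  have "(\<integral>\<^sup>+x. \<integral>\<^sup>+y. f (c * x - s * y) (s * x + c * y) \<partial>std_normal \<partial>std_normal)
      = (\<integral>\<^sup>+x. \<integral>\<^sup>+y. \<phi> (c * x - s * y) (s * x + c * y) * f (c * x - s * y) (s * x + c * y) \<partial>lborel \<partial>lborel)"
    by (subst to_lborel) (measurable, simp add: \<phi>_rotation)
  also have "\<dots> = (\<integral>\<^sup>+x. \<integral>\<^sup>+y. \<phi> x y * f x y \<partial>lborel \<partial>lborel)"
    by (rule nn_integral_lborel_rotation[OF _ cs, where f="\<lambda>x y. \<phi> x y * f x y"])
      (unfold \<phi>_def, measurable)
  also have "\<dots> = (\<integral>\<^sup>+x. \<integral>\<^sup>+y. f x y \<partial>std_normal \<partial>std_normal)"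
    using to_lborel[OF assms(1)] by simp
  finally show ?thesis .
qed

lemma product_prob_space_std_normal: "product_prob_space (\<lambda>_. std_normal)"
  by (intro product_prob_spaceI prob_space_std_normal)

lemma distr_std_normal_uminus: "distr std_normal std_normal uminus = std_normal"
proof -
  have "std_normal = density (distr lborel borel uminus) (\<lambda>x. ennreal (std_normal_density x))"
    by (simp add: lborel_distr_uminus)
  also have "\<dots> = distr (density lborel (\<lambda>x. ennreal (std_normal_density (- x)))) borel uminus"
    by (rule density_distr) measurable
  also have "\<dots> = distr std_normal std_normal uminus"
    by (intro distr_cong) (simp_all add: std_normal_density_def)
  finally show ?thesis ..
qed

subsection \<open>Givens rotations of a standard Gaussian vector\<close>

definition rotate_coords :: "'i \<Rightarrow> 'i \<Rightarrow> real \<Rightarrow> real \<Rightarrow> ('i \<Rightarrow> real) \<Rightarrow> 'i \<Rightarrow> real" where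
  "rotate_coords i j c s x = x(i := c * x i - s * x j, j := s * x i + c * x j)"

lemma (in product_sigma_finite) nn_integral_PiM_two_coords:
  assumes "finite I" "i \<in> I" "j \<in> I" "i \<noteq> j"
    and [measurable]: "h \<in> borel_measurable (PiM I M)"
  shows "(\<integral>\<^sup>+x. h x \<partial>PiM I M)
       = (\<integral>\<^sup>+w. \<integral>\<^sup>+a. \<integral>\<^sup>+b. h (w(j := a, i := b)) \<partial>M i \<partial>M j \<partial>PiM (I - {i, j}) M)"
proof -
  define J where "J = I - {i, j}"
  have I: "I = insert i (insert j J)"
    using assms unfolding J_def by auto
  have [measurable]: "h \<in> borel_measurable (PiM (insert i (insert j J)) M)"
    using assms(5) I by simp
  have fresh: "finite J" "i \<notin> insert j J" "j \<notin> J"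
    using assms unfolding J_def by auto
  have "(\<integral>\<^sup>+x. h x \<partial>PiM I M) = (\<integral>\<^sup>+x. \<integral>\<^sup>+b. h (x(i := b)) \<partial>M i \<partial>PiM (insert j J) M)"
    unfolding I by (rule product_nn_integral_insert) (use fresh in auto)
  also have "\<dots> = (\<integral>\<^sup>+w. \<integral>\<^sup>+a. \<integral>\<^sup>+b. h (w(j := a, i := b)) \<partial>M i \<partial>M j \<partial>PiM J M)"
    by (rule product_nn_integral_insert) (use fresh in auto)
  finally show ?thesis unfolding J_def .
qed

lemma measurable_rotate_coords:
  assumes "i \<in> I" "j \<in> I"
  shows "rotate_coords i j c s \<in> PiM I (\<lambda>_. std_normal) \<rightarrow>\<^sub>M PiM I (\<lambda>_. std_normal)"
  unfolding rotate_coords_def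
  by (rule measurable_fun_upd[where J=I], use assms in auto)
    (rule measurable_fun_upd[where J=I], use assms in auto)

lemma nn_integral_PiM_std_normal_rotate_coords:
  assumes fin: "finite I" and ij: "i \<in> I" "j \<in> I" "i \<noteq> j" and cs: "c\<^sup>2 + s\<^sup>2 = 1"
    and g[measurable]: "g \<in> borel_measurable (PiM I (\<lambda>_. std_normal))"
  shows "(\<integral>\<^sup>+x. g (rotate_coords i j c s x) \<partial>PiM I (\<lambda>_. std_normal)) = (\<integral>\<^sup>+x. g x \<partial>PiM I (\<lambda>_. std_normal))"
proof -
  interpret product_prob_space "\<lambda>_. std_normal"
    by (rule product_prob_space_std_normal)
  have [measurable]: "(\<lambda>x. g (rotate_coords i j c s x)) \<in> borel_measurable (PiM I (\<lambda>_. std_normal))"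
    using measurable_comp[OF measurable_rotate_coords[OF ij(1,2)] g] by (simp add: o_def)
  have inner: "(\<integral>\<^sup>+a. \<integral>\<^sup>+b. g (rotate_coords i j c s (w(j := a, i := b))) \<partial>std_normal \<partial>std_normal)
      = (\<integral>\<^sup>+a. \<integral>\<^sup>+b. g (w(j := a, i := b)) \<partial>std_normal \<partial>std_normal)"
    if w: "w \<in> space (PiM (I - {i, j}) (\<lambda>_. std_normal))" for w
  proof -
    define K where "K a b = g (w(j := a, i := b))" for a b
    have "(\<lambda>x. (w(j := fst x))(i := snd x)) \<in> borel \<Otimes>\<^sub>M borel \<rightarrow>\<^sub>M PiM I (\<lambda>_. std_normal)"
    proof (rule measurable_fun_upd[where J="(I - {i, j}) \<union> {j}"])
      show "(\<lambda>x. w(j := fst x)) \<in> borel \<Otimes>\<^sub>M borel \<rightarrow>\<^sub>M PiM (I - {i, j} \<union> {j}) (\<lambda>_. std_normal)"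
        by (rule measurable_fun_upd[where J="I - {i, j}"]) (use w in auto)
    qed (use ij in auto)
    from measurable_comp[OF this g]
    have K_measurable: "(\<lambda>(a, b). K a b) \<in> borel_measurable (borel \<Otimes>\<^sub>M borel)"
      unfolding K_def by (simp add: o_def case_prod_beta)
    have "rotate_coords i j c s (w(j := a, i := b)) = w(j := c * a - (- s) * b, i := (- s) * a + c * b)"
      for a b
      using ij by (auto simp: rotate_coords_def fun_eq_iff)
    then show ?thesis
      using nn_integral_std_normal_rotation[OF K_measurable, of c "- s"] cs by (simp add: K_def)
  qed
  have "(\<integral>\<^sup>+x. g (rotate_coords i j c s x) \<partial>PiM I (\<lambda>_. std_normal))
      = (\<integral>\<^sup>+w. \<integral>\<^sup>+a. \<integral>\<^sup>+b. g (rotate_coords i j c s (w(j := a, i := b))) \<partial>std_normal \<partial>std_normal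
           \<partial>PiM (I - {i, j}) (\<lambda>_. std_normal))"
    by (rule nn_integral_PiM_two_coords[OF fin ij]) measurable
  also have "\<dots> = (\<integral>\<^sup>+w. \<integral>\<^sup>+a. \<integral>\<^sup>+b. g (w(j := a, i := b)) \<partial>std_normal \<partial>std_normal
           \<partial>PiM (I - {i, j}) (\<lambda>_. std_normal))"
    by (rule nn_integral_cong) (rule inner)
  also have "\<dots> = (\<integral>\<^sup>+x. g x \<partial>PiM I (\<lambda>_. std_normal))"
    by (rule nn_integral_PiM_two_coords[OF fin ij, symmetric]) measurable
  finally show ?thesis .
qed

lemma distr_PiM_std_normal_rotate_coords:
  assumes "finite I" "i \<in> I" "j \<in> I" "i \<noteq> j" "c\<^sup>2 + s\<^sup>2 = 1"
  shows "distr (PiM I (\<lambda>_. std_normal)) (PiM I (\<lambda>_. std_normal)) (rotate_coords i j c s)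
       = PiM I (\<lambda>_. std_normal)"
proof (rule measure_eqI)
  fix A assume "A \<in> sets (distr (PiM I (\<lambda>_. std_normal)) (PiM I (\<lambda>_. std_normal)) (rotate_coords i j c s))"
  then have [measurable]: "A \<in> sets (PiM I (\<lambda>_. std_normal))"
    by simp
  have [measurable]: "rotate_coords i j c s \<in> PiM I (\<lambda>_. std_normal) \<rightarrow>\<^sub>M PiM I (\<lambda>_. std_normal)"
    using assms by (intro measurable_rotate_coords)
  have "emeasure (distr (PiM I (\<lambda>_. std_normal)) (PiM I (\<lambda>_. std_normal)) (rotate_coords i j c s)) A
      = (\<integral>\<^sup>+x. indicator A x \<partial>distr (PiM I (\<lambda>_. std_normal)) (PiM I (\<lambda>_. std_normal)) (rotate_coords i j c s))"
    by simp
  also have "\<dots> = (\<integral>\<^sup>+x. indicator A (rotate_coords i j c s x) \<partial>PiM I (\<lambda>_. std_normal))"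
    by (rule nn_integral_distr) measurable
  also have "\<dots> = (\<integral>\<^sup>+x. indicator A x \<partial>PiM I (\<lambda>_. std_normal))"
    using assms by (intro nn_integral_PiM_std_normal_rotate_coords) auto
  finally show "emeasure (distr (PiM I (\<lambda>_. std_normal)) (PiM I (\<lambda>_. std_normal)) (rotate_coords i j c s)) A
      = emeasure (PiM I (\<lambda>_. std_normal)) A"
    by simp
qed simp

subsection \<open>Linear maps preserving the standard Gaussian on \<open>\<real>\<^sup>n\<close>\<close>

lemma gauss_eq_PiM_std_normal: "gauss n = PiM {..<n} (\<lambda>_. std_normal)"
  unfolding gauss_def ..

lemma space_gauss: "space (gauss n) = {..<n} \<rightarrow>\<^sub>E UNIV"
  by (simp add: gauss_eq_PiM_std_normal space_PiM)

definition gauss_preserving :: "nat \<Rightarrow> ((nat \<Rightarrow> real) \<Rightarrow> nat \<Rightarrow> real) \<Rightarrow> bool" where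
  "gauss_preserving n T \<longleftrightarrow> T \<in> gauss n \<rightarrow>\<^sub>M gauss n \<and> distr (gauss n) (gauss n) T = gauss n"

lemma emeasure_gauss_preserving_vimage:
  assumes "gauss_preserving n T" "E \<in> sets (gauss n)"
  shows "emeasure (gauss n) (T -` E \<inter> space (gauss n)) = emeasure (gauss n) E"
  using assms emeasure_distr unfolding gauss_preserving_def by metis

lemma gauss_preserving_comp:
  assumes "gauss_preserving n T" "gauss_preserving n U"
  shows "gauss_preserving n (T \<circ> U)"
  using assms distr_distr[of T "gauss n" "gauss n" U "gauss n"]
  unfolding gauss_preserving_def by (auto intro: measurable_comp)

lemma gauss_preserving_cong:
  assumes "gauss_preserving n T" "\<And>x. x \<in> space (gauss n) \<Longrightarrow> T x = U x"
  shows "gauss_preserving n U"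
  using assms measurable_cong[of "gauss n" T U] distr_cong[of "gauss n" "gauss n" "gauss n" "gauss n" T U]
  unfolding gauss_preserving_def by simp

lemma gauss_preserving_uminus: "gauss_preserving n (\<lambda>e. \<lambda>i\<in>{..<n}. - e i)"
proof -
  have "distr (gauss n) (gauss n) (compose {..<n} uminus) = gauss n"
    unfolding gauss_eq_PiM_std_normal
    by (subst distr_PiM_finite_prob_space)
      (simp_all add: product_prob_space_std_normal distr_std_normal_uminus)
  moreover have "compose {..<n} uminus \<in> gauss n \<rightarrow>\<^sub>M gauss n"
    unfolding gauss_eq_PiM_std_normal compose_def by measurable
  ultimately show ?thesis
    unfolding gauss_preserving_def compose_def by simp
qed

definition mat_vec :: "nat \<Rightarrow> (nat \<Rightarrow> nat \<Rightarrow> real) \<Rightarrow> (nat \<Rightarrow> real) \<Rightarrow> nat \<Rightarrow> real" where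
  "mat_vec n M x = (\<lambda>i\<in>{..<n}. \<Sum>j<n. M i j * x j)"

definition mat_tvec :: "nat \<Rightarrow> (nat \<Rightarrow> nat \<Rightarrow> real) \<Rightarrow> (nat \<Rightarrow> real) \<Rightarrow> nat \<Rightarrow> real" where
  "mat_tvec n M v j = (\<Sum>i<n. M i j * v i)"

definition mat_mul :: "nat \<Rightarrow> (nat \<Rightarrow> nat \<Rightarrow> real) \<Rightarrow> (nat \<Rightarrow> nat \<Rightarrow> real) \<Rightarrow> nat \<Rightarrow> nat \<Rightarrow> real" where
  "mat_mul n A B i j = (\<Sum>l<n. A i l * B l j)"

definition id_mat :: "nat \<Rightarrow> nat \<Rightarrow> real" where
  "id_mat i j = (if i = j then 1 else 0)"

definition orthogonal_mat :: "nat \<Rightarrow> (nat \<Rightarrow> nat \<Rightarrow> real) \<Rightarrow> bool" where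
  "orthogonal_mat n M \<longleftrightarrow> (\<forall>i<n. \<forall>j<n. (\<Sum>l<n. M i l * M j l) = id_mat i j)"

definition givens :: "nat \<Rightarrow> nat \<Rightarrow> real \<Rightarrow> real \<Rightarrow> nat \<Rightarrow> nat \<Rightarrow> real" where
  "givens i j c s a b =
     (if a = i \<and> b = i \<or> a = j \<and> b = j then c
      else if a = i \<and> b = j then - s
      else if a = j \<and> b = i then s
      else id_mat a b)"

lemma id_mat_sym: "id_mat i j = id_mat j i"
  by (simp add: id_mat_def)

lemma sum_id_mat_mult:
  assumes "m < n"
  shows "(\<Sum>l<n. id_mat m l * f l) = f m"
proof -
  have "(\<Sum>l<n. id_mat m l * f l) = (\<Sum>l\<in>{m}. id_mat m l * f l)"
    using assms by (intro sum.mono_neutral_right) (auto simp: id_mat_def)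
  then show ?thesis
    by (simp add: id_mat_def)
qed

lemma sum_mult_id_mat: "m < n \<Longrightarrow> (\<Sum>l<n. f l * id_mat l m) = f m"
  using sum_id_mat_mult[of m n f] by (simp add: id_mat_sym mult.commute)

lemma measurable_mat_vec [measurable]: "mat_vec n M \<in> gauss n \<rightarrow>\<^sub>M gauss n"
  unfolding mat_vec_def gauss_eq_PiM_std_normal by measurable

lemma mat_vec_in_space: "mat_vec n M x \<in> space (gauss n)"
  unfolding space_gauss mat_vec_def by auto

lemma mat_vec_mat_mul: "mat_vec n (mat_mul n A B) = mat_vec n A \<circ> mat_vec n B"
proof -
  have "(\<Sum>j<n. (\<Sum>l<n. A i l * B l j) * x j) = (\<Sum>l<n. A i l * (\<Sum>j<n. B l j * x j))" for i x
    by (simp add: sum_distrib_left sum_distrib_right mult.assoc) (rule sum.swap)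
  then show ?thesis
    unfolding mat_vec_def mat_mul_def by (auto simp: fun_eq_iff)
qed

lemma mat_tvec_mat_mul: "mat_tvec n (mat_mul n A B) v = mat_tvec n B (mat_tvec n A v)"
  unfolding mat_tvec_def mat_mul_def fun_eq_iff
  by (simp add: sum_distrib_left sum_distrib_right mult_ac) (rule allI sum.swap)+

lemma sum_mult_mat_vec: "(\<Sum>i<n. u i * mat_vec n M y i) = (\<Sum>m<n. y m * mat_tvec n M u m)"
proof -
  have "(\<Sum>i<n. u i * mat_vec n M y i) = (\<Sum>i<n. \<Sum>m<n. u i * M i m * y m)"
    by (intro sum.cong) (simp_all add: mat_vec_def sum_distrib_left mult.assoc)
  also have "\<dots> = (\<Sum>m<n. y m * mat_tvec n M u m)"
    unfolding mat_tvec_def by (subst sum.swap) (simp add: sum_distrib_left mult_ac)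
  finally show ?thesis .
qed

lemma mat_vec_givens:
  assumes "i < n" "j < n" "i \<noteq> j" "a < n"
  shows "(\<Sum>b<n. givens i j c s a b * x b)
       = (if a = i then c * x i - s * x j else if a = j then s * x i + c * x j else x a)"
proof -
  have "(\<Sum>b<n. givens i j c s a b * x b)
      = (\<Sum>b<n. (if b = i then givens i j c s a i * x i else 0)
               + (if b = j then givens i j c s a j * x j else 0)
               + (if b = a \<and> a \<noteq> i \<and> a \<noteq> j then x a else 0))"
    using assms by (intro sum.cong) (auto simp: givens_def id_mat_def)
  also have "\<dots> = givens i j c s a i * x i + givens i j c s a j * x j + (if a \<noteq> i \<and> a \<noteq> j then x a else 0)"
    using assms by (simp add: sum.distrib sum.delta)
  finally show ?thesis
    using assms by (auto simp: givens_def id_mat_def)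
qed

lemma mat_tvec_givens:
  assumes "i < n" "j < n" "i \<noteq> j" "a < n"
  shows "mat_tvec n (givens i j c s) v a
       = (if a = i then c * v i + s * v j else if a = j then c * v j - s * v i else v a)"
proof -
  have "mat_tvec n (givens i j c s) v a
      = (\<Sum>b<n. (if b = i then givens i j c s i a * v i else 0)
               + (if b = j then givens i j c s j a * v j else 0)
               + (if b = a \<and> a \<noteq> i \<and> a \<noteq> j then v a else 0))"
    unfolding mat_tvec_def using assms by (intro sum.cong) (auto simp: givens_def id_mat_def)
  also have "\<dots> = givens i j c s i a * v i + givens i j c s j a * v j + (if a \<noteq> i \<and> a \<noteq> j then v a else 0)"
    using assms by (simp add: sum.distrib sum.delta)
  finally show ?thesis
    using assms by (auto simp: givens_def id_mat_def)
qed

lemma gauss_preserving_id_mat: "gauss_preserving n (mat_vec n id_mat)"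
proof (rule gauss_preserving_cong)
  show "gauss_preserving n (\<lambda>x. x)"
    unfolding gauss_preserving_def by simp
  show "x = mat_vec n id_mat x" if "x \<in> space (gauss n)" for x
    using that by (auto simp: space_gauss mat_vec_def sum_id_mat_mult PiE_def extensional_def)
qed

lemma gauss_preserving_givens:
  assumes "i < n" "j < n" "i \<noteq> j" "c\<^sup>2 + s\<^sup>2 = 1"
  shows "gauss_preserving n (mat_vec n (givens i j c s))"
proof (rule gauss_preserving_cong)
  show "gauss_preserving n (rotate_coords i j c s)"
    unfolding gauss_preserving_def gauss_eq_PiM_std_normal using assms
    by (auto intro: measurable_rotate_coords distr_PiM_std_normal_rotate_coords)
  show "rotate_coords i j c s x = mat_vec n (givens i j c s) x" if "x \<in> space (gauss n)" for x
    using that assms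
    by (auto simp: space_gauss mat_vec_def mat_vec_givens rotate_coords_def PiE_def extensional_def)
qed

lemma gauss_preserving_mat_mul:
  assumes "gauss_preserving n (mat_vec n A)" "gauss_preserving n (mat_vec n B)"
  shows "gauss_preserving n (mat_vec n (mat_mul n A B))"
  unfolding mat_vec_mat_mul using assms by (rule gauss_preserving_comp)

lemma orthogonal_mat_id_mat: "orthogonal_mat n id_mat"
  unfolding orthogonal_mat_def by (simp add: sum_id_mat_mult id_mat_sym)

lemma orthogonal_mat_givens:
  assumes "i < n" "j < n" "i \<noteq> j" "c\<^sup>2 + s\<^sup>2 = 1"
  shows "orthogonal_mat n (givens i j c s)"
  unfolding orthogonal_mat_def
proof (intro allI impI)
  fix a b assume "a < n" "b < n"
  then have "(\<Sum>l<n. givens i j c s a l * givens i j c s b l)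
      = (if a = i then c * givens i j c s b i - s * givens i j c s b j
         else if a = j then s * givens i j c s b i + c * givens i j c s b j
         else givens i j c s b a)"
    using assms by (intro mat_vec_givens) auto
  also have "\<dots> = id_mat a b"
    using assms \<open>a < n\<close> \<open>b < n\<close>
    by (auto simp: givens_def id_mat_def power2_eq_square algebra_simps)
  finally show "(\<Sum>l<n. givens i j c s a l * givens i j c s b l) = id_mat a b" .
qed

lemma orthogonal_mat_mul:
  assumes A: "orthogonal_mat n A" and B: "orthogonal_mat n B"
  shows "orthogonal_mat n (mat_mul n A B)"
  unfolding orthogonal_mat_def
proof (intro allI impI)
  fix i j assume "i < n" "j < n"
  have "(\<Sum>l<n. mat_mul n A B i l * mat_mul n A B j l)
      = (\<Sum>l<n. \<Sum>p<n. \<Sum>q<n. A i p * A j q * (B p l * B q l))"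
    unfolding mat_mul_def by (simp add: sum_product mult_ac)
  also have "\<dots> = (\<Sum>p<n. \<Sum>q<n. \<Sum>l<n. A i p * A j q * (B p l * B q l))"
    by (subst sum.swap) (rule sum.cong[OF refl], rule sum.swap)
  also have "\<dots> = (\<Sum>p<n. \<Sum>q<n. A i p * A j q * id_mat p q)"
    using B unfolding orthogonal_mat_def by (simp add: sum_distrib_left[symmetric])
  also have "\<dots> = (\<Sum>p<n. A i p * A j p)"
  proof (intro sum.cong refl)
    fix p assume "p \<in> {..<n}"
    then show "(\<Sum>q<n. A i p * A j q * id_mat p q) = A i p * A j p"
      using sum_mult_id_mat[of p n "\<lambda>q. A i p * A j q"] by (simp add: id_mat_sym[of p])
  qed
  also have "\<dots> = id_mat i j"
    using A \<open>i < n\<close> \<open>j < n\<close> unfolding orthogonal_mat_def by simp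
  finally show "(\<Sum>l<n. mat_mul n A B i l * mat_mul n A B j l) = id_mat i j" .
qed

lemma orthogonal_mat_expansion:
  assumes "orthogonal_mat n M" "i < n"
  shows "v i = (\<Sum>m<n. mat_tvec n M v m * M i m)"
proof -
  have "(\<Sum>m<n. mat_tvec n M v m * M i m) = (\<Sum>l<n. v l * (\<Sum>m<n. M i m * M l m))"
    unfolding mat_tvec_def
    by (simp add: sum_distrib_left sum_distrib_right mult_ac) (rule sum.swap)
  also have "\<dots> = (\<Sum>l<n. id_mat i l * v l)"
    using assms unfolding orthogonal_mat_def by (intro sum.cong) auto
  also have "\<dots> = v i"
    using assms by (simp add: sum_id_mat_mult)
  finally show ?thesis ..
qed

subsection \<open>A Gaussian-preserving orthonormal basis adapted to a subspace\<close>

definition id_on_first :: "nat \<Rightarrow> nat \<Rightarrow> (nat \<Rightarrow> nat \<Rightarrow> real) \<Rightarrow> bool" where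
  "id_on_first n r W \<longleftrightarrow> (\<forall>l<n. \<forall>m<n. l < r \<or> m < r \<longrightarrow> W l m = id_mat l m)"

lemma givens_angle_exists: "\<exists>c s. c\<^sup>2 + s\<^sup>2 = 1 \<and> c * b - s * a = (0::real)"
proof (cases "a\<^sup>2 + b\<^sup>2 = 0")
  case True
  then show ?thesis
    by (intro exI[of _ 1] exI[of _ 0]) (simp add: sum_power2_eq_zero_iff)
next
  case False
  define \<rho> where "\<rho> = sqrt (a\<^sup>2 + b\<^sup>2)"
  have "\<rho> \<noteq> 0" and "\<rho>\<^sup>2 = a\<^sup>2 + b\<^sup>2"
    using False unfolding \<rho>_def by simp_all
  then have "(a / \<rho>)\<^sup>2 + (b / \<rho>)\<^sup>2 = 1"
    using False by (simp add: power_divide add_divide_distrib[symmetric])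
  moreover have "(a / \<rho>) * b - (b / \<rho>) * a = 0"
    by simp
  ultimately show ?thesis
    by blast
qed

lemma id_on_first_mat_mul_givens:
  assumes "r < m" "m < n" "id_on_first n r W"
  shows "id_on_first n r (mat_mul n W (givens r m c s))"
  unfolding id_on_first_def
proof (intro allI impI)
  fix l m' assume "l < n" "m' < n" "l < r \<or> m' < r"
  then consider "m' < r" | "l < r" "r \<le> m'"
    by linarith
  then show "mat_mul n W (givens r m c s) l m' = id_mat l m'"
  proof cases
    case 1
    have "mat_mul n W (givens r m c s) l m' = mat_tvec n (givens r m c s) (\<lambda>p. W l p) m'"
      unfolding mat_mul_def mat_tvec_def by (simp add: mult.commute)
    also have "\<dots> = W l m'"
      using 1 assms \<open>m' < n\<close> by (simp add: mat_tvec_givens)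
    finally show ?thesis
      using 1 assms(3) \<open>l < n\<close> \<open>m' < n\<close> unfolding id_on_first_def by simp
  next
    case 2
    have "mat_mul n W (givens r m c s) l m' = (\<Sum>p<n. id_mat l p * givens r m c s p m')"
      unfolding mat_mul_def using 2 assms(3) \<open>l < n\<close> unfolding id_on_first_def by simp
    also have "\<dots> = givens r m c s l m'"
      using \<open>l < n\<close> by (rule sum_id_mat_mult)
    finally show ?thesis
      using 2 assms(1) unfolding givens_def by auto
  qed
qed

lemma gauss_preserving_clear_coordinate:
  assumes "r < m" "m < n"
    and W: "gauss_preserving n (mat_vec n W)" "orthogonal_mat n W" "id_on_first n r W"
  obtains W' where "gauss_preserving n (mat_vec n W')" "orthogonal_mat n W'" "id_on_first n r W'"
    "mat_tvec n W' v m = 0" "\<And>l. l < n \<Longrightarrow> l \<noteq> r \<Longrightarrow> l \<noteq> m \<Longrightarrow> mat_tvec n W' v l = mat_tvec n W v l"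
proof -
  obtain c s where cs: "c\<^sup>2 + s\<^sup>2 = 1" and clear: "c * mat_tvec n W v m - s * mat_tvec n W v r = 0"
    using givens_angle_exists by blast
  have rm: "r < n" "m < n" "r \<noteq> m"
    using assms by auto
  show ?thesis
  proof
    let ?W' = "mat_mul n W (givens r m c s)"
    show "gauss_preserving n (mat_vec n ?W')"
      using rm cs by (intro gauss_preserving_mat_mul W gauss_preserving_givens)
    show "orthogonal_mat n ?W'"
      using rm cs by (intro orthogonal_mat_mul W orthogonal_mat_givens)
    show "id_on_first n r ?W'"
      using assms by (intro id_on_first_mat_mul_givens)
    show "mat_tvec n ?W' v m = 0"
      using rm clear by (simp add: mat_tvec_mat_mul mat_tvec_givens)
    show "mat_tvec n ?W' v l = mat_tvec n W v l" if "l < n" "l \<noteq> r" "l \<noteq> m" for l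
      using rm that by (simp add: mat_tvec_mat_mul mat_tvec_givens)
  qed
qed

lemma gauss_preserving_clear_tail:
  assumes "r < n"
  obtains W where "gauss_preserving n (mat_vec n W)" "orthogonal_mat n W" "id_on_first n r W"
    "\<And>m. r < m \<Longrightarrow> m < n \<Longrightarrow> mat_tvec n W v m = 0"
proof -
  have "\<exists>W. gauss_preserving n (mat_vec n W) \<and> orthogonal_mat n W \<and> id_on_first n r W \<and>
      (\<forall>m. r < m \<and> m \<le> r + t \<and> m < n \<longrightarrow> mat_tvec n W v m = 0)" for t
  proof (induction t)
    case 0
    have "id_on_first n r id_mat"
      by (simp add: id_on_first_def)
    then show ?case
      using gauss_preserving_id_mat orthogonal_mat_id_mat by auto
  next
    case (Suc t)
    then obtain W where W: "gauss_preserving n (mat_vec n W)" "orthogonal_mat n W" "id_on_first n r W"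
      and cleared: "\<forall>m. r < m \<and> m \<le> r + t \<and> m < n \<longrightarrow> mat_tvec n W v m = 0"
      by blast
    show ?case
    proof (cases "Suc (r + t) < n")
      case True
      obtain W' where "gauss_preserving n (mat_vec n W')" "orthogonal_mat n W'" "id_on_first n r W'"
        "mat_tvec n W' v (Suc (r + t)) = 0"
        "\<And>l. l < n \<Longrightarrow> l \<noteq> r \<Longrightarrow> l \<noteq> Suc (r + t) \<Longrightarrow> mat_tvec n W' v l = mat_tvec n W v l"
        by (rule gauss_preserving_clear_coordinate[OF _ True W]) auto
      then show ?thesis
        using cleared by (intro exI[of _ W']) (auto simp: le_Suc_eq)
    next
      case False
      then show ?thesis
        using W cleared by (intro exI[of _ W]) auto
    qed
  qed
  from this[of n] show ?thesis
    using that by auto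
qed

definition in_span :: "nat \<Rightarrow> nat \<Rightarrow> (nat \<Rightarrow> nat \<Rightarrow> real) \<Rightarrow> (nat \<Rightarrow> real) \<Rightarrow> bool" where
  "in_span n k V w \<longleftrightarrow> (\<exists>d. \<forall>i<n. w i = (\<Sum>j<k. d j * V j i))"

definition lin_independent :: "nat \<Rightarrow> nat \<Rightarrow> (nat \<Rightarrow> nat \<Rightarrow> real) \<Rightarrow> bool" where
  "lin_independent n k V \<longleftrightarrow> (\<forall>d. (\<forall>i<n. (\<Sum>j<k. d j * V j i) = 0) \<longrightarrow> (\<forall>j<k. d j = 0))"

lemma lin_independent_Suc: "lin_independent n (Suc k) V \<Longrightarrow> lin_independent n k V"
  unfolding lin_independent_def
proof (intro allI impI)
  fix d j
  assume indep: "\<forall>d. (\<forall>i<n. (\<Sum>j<Suc k. d j * V j i) = 0) \<longrightarrow> (\<forall>j<Suc k. d j = 0)"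
    and "\<forall>i<n. (\<Sum>j<k. d j * V j i) = 0" and "j < k"
  then have "\<forall>i<n. (\<Sum>j<Suc k. (d(k := 0)) j * V j i) = 0"
    by simp
  then have "\<forall>j<Suc k. (d(k := 0)) j = 0"
    using indep by blast
  then show "d j = 0"
    using \<open>j < k\<close> by (metis fun_upd_other less_Suc_eq less_irrefl)
qed

lemma not_in_span_if_lin_independent:
  assumes "lin_independent n (Suc k) V"
  shows "\<not> in_span n k V (V k)"
proof
  assume "in_span n k V (V k)"
  then obtain d where "\<forall>i<n. V k i = (\<Sum>j<k. d j * V j i)"
    unfolding in_span_def by blast
  then have "\<forall>i<n. (\<Sum>j<Suc k. (d(k := -1)) j * V j i) = 0"
    by simp
  then have "(d(k := -1)) k = 0"
    using assms unfolding lin_independent_def by blast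
  then show False
    by simp
qed

lemma in_span_vec: "j < k \<Longrightarrow> in_span n k V (V j)"
  unfolding in_span_def using sum_id_mat_mult[of j k] by metis

lemma in_span_Suc:
  assumes "in_span n k V w"
  shows "in_span n (Suc k) V w"
proof -
  obtain d where "\<forall>i<n. w i = (\<Sum>j<k. d j * V j i)"
    using assms unfolding in_span_def by blast
  then have "\<forall>i<n. w i = (\<Sum>j<Suc k. (d(k := 0)) j * V j i)"
    by simp
  then show ?thesis
    unfolding in_span_def by blast
qed

lemma in_span_diff:
  assumes "in_span n k V w" "in_span n k V w'"
  shows "in_span n k V (\<lambda>i. w i - w' i)"
proof -
  obtain d where "\<forall>i<n. w i = (\<Sum>j<k. d j * V j i)"
    using assms(1) unfolding in_span_def by blast
  moreover obtain d' where "\<forall>i<n. w' i = (\<Sum>j<k. d' j * V j i)"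
    using assms(2) unfolding in_span_def by blast
  ultimately have "\<forall>i<n. w i - w' i = (\<Sum>j<k. (d j - d' j) * V j i)"
    by (simp add: left_diff_distrib sum_subtractf)
  then show ?thesis
    unfolding in_span_def by (rule exI[of _ "\<lambda>j. d j - d' j"])
qed

lemma in_span_scale:
  assumes "in_span n k V w"
  shows "in_span n k V (\<lambda>i. a * w i)"
proof -
  obtain d where "\<forall>i<n. w i = (\<Sum>j<k. d j * V j i)"
    using assms unfolding in_span_def by blast
  then have "\<forall>i<n. a * w i = (\<Sum>j<k. (a * d j) * V j i)"
    by (simp add: sum_distrib_left mult.assoc)
  then show ?thesis
    unfolding in_span_def by (rule exI[of _ "\<lambda>j. a * d j"])
qed

lemma in_span_lincomb:
  assumes "finite S" "\<And>m. m \<in> S \<Longrightarrow> in_span n k V (w m)"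
  shows "in_span n k V (\<lambda>i. \<Sum>m\<in>S. a m * w m i)"
proof -
  have "\<forall>m\<in>S. \<exists>d. \<forall>i<n. w m i = (\<Sum>j<k. d j * V j i)"
    using assms(2) unfolding in_span_def by blast
  from bchoice[OF this] obtain D where D: "\<forall>m\<in>S. \<forall>i<n. w m i = (\<Sum>j<k. D m j * V j i)"
    by blast
  have "\<forall>i<n. (\<Sum>m\<in>S. a m * w m i) = (\<Sum>j<k. (\<Sum>m\<in>S. a m * D m j) * V j i)"
  proof (intro allI impI)
    fix i assume "i < n"
    then have "(\<Sum>m\<in>S. a m * w m i) = (\<Sum>m\<in>S. \<Sum>j<k. a m * D m j * V j i)"
      using D by (simp add: sum_distrib_left mult.assoc)
    also have "\<dots> = (\<Sum>j<k. (\<Sum>m\<in>S. a m * D m j) * V j i)"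
      by (subst sum.swap) (simp add: sum_distrib_right)
    finally show "(\<Sum>m\<in>S. a m * w m i) = (\<Sum>j<k. (\<Sum>m\<in>S. a m * D m j) * V j i)" .
  qed
  then show ?thesis
    unfolding in_span_def by (rule exI[of _ "\<lambda>j. \<Sum>m\<in>S. a m * D m j"])
qed

text \<open>\<open>M\<close> is the orthogonal factor of a QR decomposition of \<open>(V\<^sub>0 \<dots> V\<^sub>k\<^sub>-\<^sub>1)\<close>.\<close>

definition adapted_basis :: "nat \<Rightarrow> nat \<Rightarrow> (nat \<Rightarrow> nat \<Rightarrow> real) \<Rightarrow> (nat \<Rightarrow> nat \<Rightarrow> real) \<Rightarrow> bool" where
  "adapted_basis n k V M \<longleftrightarrow> orthogonal_mat n M \<and> (\<forall>m<k. in_span n k V (\<lambda>i. M i m))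
     \<and> (\<forall>j<k. \<forall>m. k \<le> m \<and> m < n \<longrightarrow> mat_tvec n M (V j) m = 0)"

lemma mat_mul_id_on_first_col:
  assumes "id_on_first n r W" "m < r" "r \<le> n"
  shows "mat_mul n M W i m = M i m"
proof -
  have "mat_mul n M W i m = (\<Sum>l<n. M i l * id_mat l m)"
    unfolding mat_mul_def using assms unfolding id_on_first_def by (intro sum.cong) auto
  then show ?thesis
    using assms by (simp add: sum_mult_id_mat)
qed

lemma mat_tvec_id_on_first_vanishing:
  assumes "id_on_first n r W" "\<And>l. r \<le> l \<Longrightarrow> l < n \<Longrightarrow> u l = 0" "r \<le> m" "m < n"
  shows "mat_tvec n W u m = 0"
  unfolding mat_tvec_def
proof (intro sum.neutral ballI)
  fix l assume "l \<in> {..<n}"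
  then show "W l m * u l = 0"
    using assms unfolding id_on_first_def id_mat_def by (cases "l < r") auto
qed

lemma adapted_basis_dim_less:
  assumes indep: "lin_independent n (Suc k) V" and M: "adapted_basis n k V M"
  shows "k < n"
proof (rule ccontr)
  assume "\<not> k < n"
  then have "in_span n k V (\<lambda>i. \<Sum>m<n. mat_tvec n M (V k) m * M i m)"
    using M unfolding adapted_basis_def by (intro in_span_lincomb) auto
  moreover have "\<forall>i<n. V k i = (\<Sum>m<n. mat_tvec n M (V k) m * M i m)"
    using M orthogonal_mat_expansion unfolding adapted_basis_def by blast
  ultimately have "in_span n k V (V k)"
    unfolding in_span_def by simp
  then show False
    using not_in_span_if_lin_independent[OF indep] by contradiction
qed

lemma orthogonal_mat_column_in_span:
  assumes indep: "lin_independent n (Suc k) V" and orth: "orthogonal_mat n M" and "k < n"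
    and span: "\<And>m. m < k \<Longrightarrow> in_span n k V (\<lambda>i. M i m)"
    and tail: "\<And>m. k < m \<Longrightarrow> m < n \<Longrightarrow> mat_tvec n M (V k) m = 0"
  shows "in_span n (Suc k) V (\<lambda>i. M i k)"
proof -
  define g where "g = mat_tvec n M (V k)"
  have span_first: "in_span n k V (\<lambda>i. \<Sum>m<k. g m * M i m)"
    by (intro in_span_lincomb span) auto
  have expansion: "V k i = (\<Sum>m<k. g m * M i m) + g k * M i k" if "i < n" for i
  proof -
    have "V k i = (\<Sum>m<n. g m * M i m)"
      unfolding g_def using orth that by (rule orthogonal_mat_expansion)
    also have "\<dots> = (\<Sum>m<Suc k. g m * M i m)"
      using \<open>k < n\<close> tail by (intro sum.mono_neutral_right) (auto simp: g_def)
    finally show ?thesis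
      by simp
  qed
  have "g k \<noteq> 0"
  proof
    assume "g k = 0"
    then have "in_span n k V (V k)"
      using span_first unfolding in_span_def by (metis expansion add_0_right mult_zero_left)
    then show False
      using not_in_span_if_lin_independent[OF indep] by contradiction
  qed
  have "in_span n (Suc k) V (\<lambda>i. (1 / g k) * (V k i - (\<Sum>m<k. g m * M i m)))"
    by (intro in_span_scale in_span_diff in_span_vec in_span_Suc span_first) simp
  moreover have "M i k = (1 / g k) * (V k i - (\<Sum>m<k. g m * M i m))" if "i < n" for i
    using expansion[OF that] \<open>g k \<noteq> 0\<close> by (simp add: field_simps)
  ultimately show ?thesis
    unfolding in_span_def by simp
qed

lemma adapted_basis_Suc:
  assumes indep: "lin_independent n (Suc k) V"
    and M: "gauss_preserving n (mat_vec n M)" "adapted_basis n k V M"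
  obtains M' where "gauss_preserving n (mat_vec n M')" "adapted_basis n (Suc k) V M'"
proof -
  have orth: "orthogonal_mat n M" and span: "\<And>m. m < k \<Longrightarrow> in_span n k V (\<lambda>i. M i m)"
    and perp: "\<And>j m. j < k \<Longrightarrow> k \<le> m \<Longrightarrow> m < n \<Longrightarrow> mat_tvec n M (V j) m = 0"
    using M(2) unfolding adapted_basis_def by auto
  have "k < n"
    using indep M(2) by (rule adapted_basis_dim_less)
  obtain W where W: "gauss_preserving n (mat_vec n W)" "orthogonal_mat n W" "id_on_first n k W"
    and cleared: "\<And>m. k < m \<Longrightarrow> m < n \<Longrightarrow> mat_tvec n W (mat_tvec n M (V k)) m = 0"
    using gauss_preserving_clear_tail[OF \<open>k < n\<close>] by blast
  define M' where "M' = mat_mul n M W"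
  have first_cols: "M' i m = M i m" if "m < k" for i m
    unfolding M'_def using W(3) that \<open>k < n\<close> by (intro mat_mul_id_on_first_col) auto
  have M': "gauss_preserving n (mat_vec n M')" "orthogonal_mat n M'"
    unfolding M'_def by (intro gauss_preserving_mat_mul orthogonal_mat_mul M orth W)+
  have tail: "mat_tvec n M' (V k) m = 0" if "k < m" "m < n" for m
    using cleared that by (simp add: M'_def mat_tvec_mat_mul)
  have span': "in_span n k V (\<lambda>i. M' i m)" if "m < k" for m
    using span[OF that] by (simp add: first_cols that)
  have "in_span n (Suc k) V (\<lambda>i. M' i m)" if "m < Suc k" for m
  proof (cases "m < k")
    case True
    then show ?thesis
      by (intro in_span_Suc span')
  next
    case False
    then have "m = k"
      using that by simp
    then show ?thesis
      using orthogonal_mat_column_in_span[OF indep M'(2) \<open>k < n\<close> span' tail] by simp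
  qed
  moreover have "mat_tvec n M' (V j) m = 0" if "j < Suc k" "Suc k \<le> m" "m < n" for j m
  proof (cases "j = k")
    case True
    then show ?thesis
      using tail that by simp
  next
    case False
    then have "mat_tvec n W (mat_tvec n M (V j)) m = 0"
      using that perp by (intro mat_tvec_id_on_first_vanishing[OF W(3)]) auto
    then show ?thesis
      by (simp add: M'_def mat_tvec_mat_mul)
  qed
  ultimately have "adapted_basis n (Suc k) V M'"
    using M'(2) unfolding adapted_basis_def by blast
  with M'(1) show ?thesis
    by (rule that)
qed

lemma gauss_preserving_adapted_basis:
  "lin_independent n k V \<Longrightarrow> k \<le> n \<and> (\<exists>M. gauss_preserving n (mat_vec n M) \<and> adapted_basis n k V M)"
proof (induction k)
  case 0
  show ?case
    using gauss_preserving_id_mat orthogonal_mat_id_mat unfolding adapted_basis_def by auto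
next
  case (Suc k)
  then obtain M where M: "gauss_preserving n (mat_vec n M)" "adapted_basis n k V M"
    using lin_independent_Suc by blast
  then show ?case
    using adapted_basis_dim_less[OF Suc.prems M(2)] adapted_basis_Suc[OF Suc.prems M]
    by (metis Suc_leI)
qed

subsection \<open>Events depending on disjoint blocks of coordinates\<close>

lemma (in product_sigma_finite) emeasure_PiM_Un_fold:
  assumes "finite I" "finite J" "I \<inter> J = {}" "E \<in> sets (PiM (I \<union> J) M)"
  shows "emeasure (PiM (I \<union> J) M) E
       = (\<integral>\<^sup>+a. \<integral>\<^sup>+b. indicator E (merge I J (a, b)) \<partial>PiM J M \<partial>PiM I M)"
  using assms by (simp add: product_nn_integral_fold[symmetric])

lemma (in product_prob_space) emeasure_PiM_Int_disjoint_blocks: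
  assumes "finite K1" "finite K2" "K1 \<inter> K2 = {}"
    and [measurable]: "E1 \<in> sets (PiM (K1 \<union> K2) M)" "E2 \<in> sets (PiM (K1 \<union> K2) M)"
    and dep1: "\<And>x y. x \<in> space (PiM (K1 \<union> K2) M) \<Longrightarrow> y \<in> space (PiM (K1 \<union> K2) M) \<Longrightarrow>
      (\<forall>i\<in>K1. x i = y i) \<Longrightarrow> x \<in> E1 \<longleftrightarrow> y \<in> E1"
    and dep2: "\<And>x y. x \<in> space (PiM (K1 \<union> K2) M) \<Longrightarrow> y \<in> space (PiM (K1 \<union> K2) M) \<Longrightarrow>
      (\<forall>i\<in>K2. x i = y i) \<Longrightarrow> x \<in> E2 \<longleftrightarrow> y \<in> E2"
  shows "emeasure (PiM (K1 \<union> K2) M) (E1 \<inter> E2)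
       = emeasure (PiM (K1 \<union> K2) M) E1 * emeasure (PiM (K1 \<union> K2) M) E2"
proof -
  interpret P1: prob_space "PiM K1 M"
    by (intro prob_space_PiM prob_space)
  interpret P2: prob_space "PiM K2 M"
    by (intro prob_space_PiM prob_space)
  obtain a0 b0 where a0: "a0 \<in> space (PiM K1 M)" and b0: "b0 \<in> space (PiM K2 M)"
    using P1.not_empty P2.not_empty by blast
  have merge_space: "merge K1 K2 (a, b) \<in> space (PiM (K1 \<union> K2) M)"
    if "a \<in> space (PiM K1 M)" "b \<in> space (PiM K2 M)" for a b
    using measurable_space[OF measurable_merge, of "(a, b)" K1 M K2] that by (simp add: space_pair_measure)
  define f1 :: "_ \<Rightarrow> ennreal" where "f1 a = indicator E1 (merge K1 K2 (a, b0))" for a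
  define f2 :: "_ \<Rightarrow> ennreal" where "f2 b = indicator E2 (merge K1 K2 (a0, b))" for b
  have [measurable]: "f1 \<in> borel_measurable (PiM K1 M)" "f2 \<in> borel_measurable (PiM K2 M)"
    unfolding f1_def f2_def using a0 b0 by measurable
  have f1: "indicator E1 (merge K1 K2 (a, b)) = f1 a"
    and f2: "indicator E2 (merge K1 K2 (a, b)) = f2 b"
    if "a \<in> space (PiM K1 M)" "b \<in> space (PiM K2 M)" for a b
  proof -
    have "merge K1 K2 (a, b) \<in> E1 \<longleftrightarrow> merge K1 K2 (a, b0) \<in> E1"
      using that b0 by (intro dep1 merge_space) (auto simp: merge_def)
    then show "indicator E1 (merge K1 K2 (a, b)) = f1 a"
      by (simp add: f1_def indicator_def)
    have "merge K1 K2 (a, b) \<in> E2 \<longleftrightarrow> merge K1 K2 (a0, b) \<in> E2"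
      using that a0 \<open>K1 \<inter> K2 = {}\<close> by (intro dep2 merge_space) (auto simp: merge_def)
    then show "indicator E2 (merge K1 K2 (a, b)) = f2 b"
      by (simp add: f2_def indicator_def)
  qed
  have "emeasure (PiM (K1 \<union> K2) M) (E1 \<inter> E2) = (\<integral>\<^sup>+a. \<integral>\<^sup>+b. f1 a * f2 b \<partial>PiM K2 M \<partial>PiM K1 M)"
    unfolding emeasure_PiM_Un_fold[OF assms(1-3) sets.Int[OF assms(4,5)]] indicator_inter_arith
    by (intro nn_integral_cong) (simp add: f1 f2)
  also have "\<dots> = (\<integral>\<^sup>+a. f1 a \<partial>PiM K1 M) * (\<integral>\<^sup>+b. f2 b \<partial>PiM K2 M)"
    by (simp add: nn_integral_cmult nn_integral_multc)
  also have "(\<integral>\<^sup>+a. f1 a \<partial>PiM K1 M) = emeasure (PiM (K1 \<union> K2) M) E1"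
    unfolding emeasure_PiM_Un_fold[OF assms(1-3) assms(4)]
    by (intro nn_integral_cong) (simp add: f1 P2.emeasure_space_1 cong: nn_integral_cong)
  also have "(\<integral>\<^sup>+b. f2 b \<partial>PiM K2 M) = emeasure (PiM (K1 \<union> K2) M) E2"
    unfolding emeasure_PiM_Un_fold[OF assms(1-3) assms(5)]
    by (simp add: f2 P1.emeasure_space_1 cong: nn_integral_cong)
  finally show ?thesis .
qed

subsection \<open>The KKT events of the lasso\<close>

lemma finite_supp [simp]: "finite (supp p \<beta>)"
  unfolding supp_def by auto

lemma supp_uminus [simp]: "supp p (\<lambda>j. - \<beta> j) = supp p \<beta>"
  unfolding supp_def by auto

lemma inact_uminus [simp]: "inact p (\<lambda>j. - \<beta> j) = inact p \<beta>"
  unfolding inact_def by simp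

lemma sgnv_uminus [simp]: "sgnv (\<lambda>j. - \<beta> j) = (\<lambda>j. - sgnv \<beta> j)"
  unfolding sgnv_def by (simp add: sgn_minus)

lemma PA_uminus [simp]: "PA n p (\<lambda>j. - \<beta> j) X = PA n p \<beta> X"
  unfolding PA_def by simp

lemma design_uminus [simp]: "design n p (\<lambda>j. - \<beta> j) X = design n p \<beta> X"
  unfolding design_def by simp

lemma design_dim_pos:
  assumes "design n p \<beta> X" "supp p \<beta> \<noteq> {}"
  shows "0 < n"
proof (rule ccontr)
  assume "\<not> 0 < n"
  obtain j where "j \<in> supp p \<beta>"
    using assms(2) by blast
  then have "0 < Vd n X j"
    using assms(1) unfolding design_def by blast
  then show False
    using \<open>\<not> 0 < n\<close> unfolding Vd_def by simp
qed

lemma S_event_in_sets: "S_event n p lam \<beta> X \<in> sets (gauss n)"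
  unfolding S_event_def uvec_def Let_def gauss_eq_PiM_std_normal by measurable

lemma I_event_in_sets: "I_event n p lam \<beta> X \<in> sets (gauss n)"
  unfolding I_event_def vvec_def Let_def gauss_eq_PiM_std_normal by measurable

lemma uvec_uminus:
  "uvec n p lam (\<lambda>j. - \<beta> j) X e j = uvec n p lam \<beta> X (\<lambda>i\<in>{..<n}. - e i) j"
  unfolding uvec_def Let_def by (simp add: sum_negf)

lemma vvec_uminus:
  "vvec n p lam (\<lambda>j. - \<beta> j) X e j = - vvec n p lam \<beta> X (\<lambda>i\<in>{..<n}. - e i) j"
  unfolding vvec_def Let_def by (simp add: sum_negf sum_subtractf algebra_simps)

lemma phi_uminus: "phi n p lam X (\<lambda>j. - \<beta> j) = phi n p lam X \<beta>"
proof -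
  let ?E = "S_event n p lam \<beta> X \<inter> I_event n p lam \<beta> X"
  let ?flip = "\<lambda>e. \<lambda>i\<in>{..<n}. - e i"
  have "?flip e \<in> space (gauss n)" for e
    by (simp add: space_gauss)
  then have "S_event n p lam (\<lambda>j. - \<beta> j) X \<inter> I_event n p lam (\<lambda>j. - \<beta> j) X
      = ?flip -` ?E \<inter> space (gauss n)"
    unfolding S_event_def I_event_def by (auto simp: uvec_uminus vvec_uminus sgnv_def sgn_minus)
  also have "emeasure (gauss n) \<dots> = emeasure (gauss n) ?E"
    using S_event_in_sets I_event_in_sets
    by (intro emeasure_gauss_preserving_vimage gauss_preserving_uminus) blast
  finally show ?thesis
    unfolding phi_def measure_def by simp
qed

lemma Gram_inverse:
  assumes "design n p \<beta> X" "supp p \<beta> \<noteq> {}" "j \<in> supp p \<beta>" "a \<in> supp p \<beta>"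
  shows "(\<Sum>k\<in>supp p \<beta>. mat_inv_on (supp p \<beta>) (\<lambda>j k. \<Sum>l<n. Fm n X l j * Fm n X l k) j k
           * (\<Sum>l<n. Fm n X l k * Fm n X l a)) = id_mat j a"
proof -
  define A where "A = supp p \<beta>"
  define G where "G j k = (\<Sum>l<n. Fm n X l j * Fm n X l k)" for j k
  have "0 < n"
    using assms(1,2) by (rule design_dim_pos)
  obtain N where N1: "\<forall>i\<in>A. \<forall>j\<in>A. (\<Sum>k\<in>A. Cm n X i k * N k j) = (if i = j then 1 else 0)"
    and N2: "\<forall>i\<in>A. \<forall>j\<in>A. (\<Sum>k\<in>A. N i k * Cm n X k j) = (if i = j then 1 else 0)"
    using assms(1) unfolding design_def mat_invertible_on_def A_def by blast
  have Cm_G: "Cm n X j k = G j k / real n" for j k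
    unfolding Cm_def G_def by simp
  have "\<exists>N. (\<forall>i\<in>A. \<forall>j\<in>A. (\<Sum>k\<in>A. G i k * N k j) = (if i = j then 1 else 0))
      \<and> (\<forall>i\<in>A. \<forall>j\<in>A. (\<Sum>k\<in>A. N i k * G k j) = (if i = j then 1 else 0))"
    using N1 N2 \<open>0 < n\<close>
    by (intro exI[of _ "\<lambda>i j. N i j / real n"]) (simp add: Cm_G mult.commute)
  from someI_ex[OF this] show ?thesis
    using assms(3,4) unfolding mat_inv_on_def A_def G_def id_mat_def by blast
qed

lemma PA_active_column:
  assumes "design n p \<beta> X" "supp p \<beta> \<noteq> {}" "a \<in> supp p \<beta>"
  shows "(\<Sum>i'<n. PA n p \<beta> X i i' * Fm n X i' a) = Fm n X i a"
proof -
  define A where "A = supp p \<beta>"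
  define G where "G = mat_inv_on A (\<lambda>j k. \<Sum>l<n. Fm n X l j * Fm n X l k)"
  have "(\<Sum>i'<n. PA n p \<beta> X i i' * Fm n X i' a)
      = (\<Sum>j\<in>A. Fm n X i j * (\<Sum>k\<in>A. G j k * (\<Sum>i'<n. Fm n X i' k * Fm n X i' a)))"
    unfolding PA_def Let_def A_def[symmetric] G_def[symmetric]
    by (simp add: sum_distrib_left sum_distrib_right mult_ac)
      (subst sum.swap, rule sum.cong[OF refl], subst sum.swap, simp)
  also have "\<dots> = (\<Sum>j\<in>A. Fm n X i j * id_mat j a)"
    using Gram_inverse[OF assms(1,2) _ assms(3)] unfolding A_def G_def by simp
  also have "\<dots> = Fm n X i a"
    using assms(3) unfolding A_def id_mat_def by (simp add: if_distrib sum.delta' cong: if_cong)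
  finally show ?thesis .
qed

lemma vvec_add_active_columns:
  assumes "design n p \<beta> X" "supp p \<beta> \<noteq> {}" "\<forall>j<k. h j \<in> supp p \<beta>"
    and "\<forall>i<n. e' i = e i + (\<Sum>j<k. d j * Fm n X i (h j))"
  shows "vvec n p lam \<beta> X e' = vvec n p lam \<beta> X e"
proof -
  have "e' i - (\<Sum>i'<n. PA n p \<beta> X i i' * e' i') = e i - (\<Sum>i'<n. PA n p \<beta> X i i' * e i')"
    if "i < n" for i
  proof -
    have "(\<Sum>i'<n. PA n p \<beta> X i i' * e' i')
        = (\<Sum>i'<n. PA n p \<beta> X i i' * e i') + (\<Sum>j<k. d j * (\<Sum>i'<n. PA n p \<beta> X i i' * Fm n X i' (h j)))"
      using assms(4)
      by (simp add: distrib_left sum.distrib sum_distrib_left mult_ac) (rule sum.swap)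
    also have "\<dots> = (\<Sum>i'<n. PA n p \<beta> X i i' * e i') + (\<Sum>j<k. d j * Fm n X i (h j))"
      using assms(3) by (simp add: PA_active_column[OF assms(1,2)])
    finally show ?thesis
      using assms(4) that by simp
  qed
  then have "(\<Sum>i<n. Fm n X i j * (e' i - (\<Sum>i'<n. PA n p \<beta> X i i' * e' i')))
      = (\<Sum>i<n. Fm n X i j * (e i - (\<Sum>i'<n. PA n p \<beta> X i i' * e i')))" for j
    by (intro sum.cong) simp_all
  then show ?thesis
    unfolding vvec_def Let_def fun_eq_iff by simp
qed

lemma uvec_cong_active:
  assumes "\<forall>b\<in>supp p \<beta>. (\<Sum>i<n. Fm n X i b * e i) = (\<Sum>i<n. Fm n X i b * e' i)"
  shows "uvec n p lam \<beta> X e = uvec n p lam \<beta> X e'"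
  unfolding uvec_def Let_def fun_eq_iff using assms by (simp cong: sum.cong)

lemma lin_independent_active_columns:
  assumes d: "design n p \<beta> X" and h: "bij_betw h {..<k} (supp p \<beta>)"
  shows "lin_independent n k (\<lambda>j i. Fm n X i (h j))"
  unfolding lin_independent_def
proof (intro allI impI)
  fix c :: "nat \<Rightarrow> real" and j
  assume c: "\<forall>i<n. (\<Sum>j<k. c j * Fm n X i (h j)) = 0" and "j < k"
  define A where "A = supp p \<beta>"
  define c' where "c' a = c (inv_into {..<k} h a)" for a
  have c'_h: "c' (h j) = c j" if "j < k" for j
    unfolding c'_def using h that by (simp add: bij_betw_def inv_into_f_f)
  have F_c': "(\<Sum>a\<in>A. c' a * Fm n X i a) = 0" if "i < n" for i
    using c that unfolding A_def sum.reindex_bij_betw[OF h, symmetric] by (simp add: c'_h)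
  have C_c': "(\<Sum>a\<in>A. Cm n X b a * c' a) = 0" for b
  proof -
    have "(\<Sum>a\<in>A. Cm n X b a * c' a) = (1 / real n) * (\<Sum>l<n. Fm n X l b * (\<Sum>a\<in>A. c' a * Fm n X l a))"
      unfolding Cm_def by (simp add: sum_distrib_left sum_distrib_right mult_ac) (rule sum.swap)
    then show ?thesis
      by (simp add: F_c')
  qed
  obtain N where N: "\<forall>i\<in>A. \<forall>j\<in>A. (\<Sum>k\<in>A. N i k * Cm n X k j) = (if i = j then 1 else 0)"
    using d unfolding design_def mat_invertible_on_def A_def by blast
  have "c' b = 0" if "b \<in> A" for b
  proof -
    have "c' b = (\<Sum>a\<in>A. if b = a then c' a else 0)"
      using that by (simp add: A_def)
    also have "\<dots> = (\<Sum>a\<in>A. (\<Sum>l\<in>A. N b l * Cm n X l a) * c' a)"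
      using N that by (intro sum.cong) auto
    also have "\<dots> = (\<Sum>l\<in>A. N b l * (\<Sum>a\<in>A. Cm n X l a * c' a))"
      by (simp add: sum_distrib_left sum_distrib_right mult_ac) (rule sum.swap)
    finally show ?thesis
      by (simp add: C_c')
  qed
  moreover have "h j \<in> A"
    using h \<open>j < k\<close> unfolding A_def by (auto simp: bij_betw_def)
  ultimately show "c j = 0"
    using c'_h \<open>j < k\<close> by metis
qed

lemma S_event_mat_vec_first_block:
  assumes M: "adapted_basis n k (\<lambda>j i. Fm n X i (h j)) M" and h: "supp p \<beta> \<subseteq> h ` {..<k}"
    and agree: "\<forall>m<k. y m = y' m"
  shows "mat_vec n M y \<in> S_event n p lam \<beta> X \<longleftrightarrow> mat_vec n M y' \<in> S_event n p lam \<beta> X"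
proof -
  have "(\<Sum>i<n. Fm n X i b * mat_vec n M y i) = (\<Sum>i<n. Fm n X i b * mat_vec n M y' i)"
    if b: "b \<in> supp p \<beta>" for b
  proof -
    obtain j where "j < k" "b = h j"
      using h b by blast
    then have tail: "mat_tvec n M (\<lambda>i. Fm n X i b) m = 0" if "k \<le> m" "m < n" for m
      using M that unfolding adapted_basis_def by auto
    show ?thesis
      unfolding sum_mult_mat_vec
    proof (intro sum.cong refl)
      fix m assume "m \<in> {..<n}"
      then show "y m * mat_tvec n M (\<lambda>i. Fm n X i b) m = y' m * mat_tvec n M (\<lambda>i. Fm n X i b) m"
        using agree tail by (cases "m < k") auto
    qed
  qed
  then have "uvec n p lam \<beta> X (mat_vec n M y) = uvec n p lam \<beta> X (mat_vec n M y')"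
    by (intro uvec_cong_active) blast
  then show ?thesis
    unfolding S_event_def using mat_vec_in_space by simp
qed

lemma I_event_mat_vec_last_block:
  assumes "design n p \<beta> X" "supp p \<beta> \<noteq> {}" and h: "\<forall>j<k. h j \<in> supp p \<beta>"
    and M: "adapted_basis n k (\<lambda>j i. Fm n X i (h j)) M" and "k \<le> n"
    and agree: "\<forall>m. k \<le> m \<and> m < n \<longrightarrow> y m = y' m"
  shows "mat_vec n M y' \<in> I_event n p lam \<beta> X \<longleftrightarrow> mat_vec n M y \<in> I_event n p lam \<beta> X"
proof -
  have "in_span n k (\<lambda>j i. Fm n X i (h j)) (\<lambda>i. \<Sum>m<k. (y' m - y m) * M i m)"
    using M unfolding adapted_basis_def by (intro in_span_lincomb) auto
  then obtain d where d: "\<forall>i<n. (\<Sum>m<k. (y' m - y m) * M i m) = (\<Sum>j<k. d j * Fm n X i (h j))"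
    unfolding in_span_def by blast
  have shift: "\<forall>i<n. mat_vec n M y' i = mat_vec n M y i + (\<Sum>j<k. d j * Fm n X i (h j))"
  proof (intro allI impI)
    fix i assume "i < n"
    have "mat_vec n M y' i - mat_vec n M y i = (\<Sum>m<n. (y' m - y m) * M i m)"
      using \<open>i < n\<close> by (simp add: mat_vec_def sum_subtractf algebra_simps)
    also have "\<dots> = (\<Sum>m<k. (y' m - y m) * M i m)"
      using agree \<open>k \<le> n\<close> by (intro sum.mono_neutral_right) auto
    finally show "mat_vec n M y' i = mat_vec n M y i + (\<Sum>j<k. d j * Fm n X i (h j))"
      using d \<open>i < n\<close> by simp
  qed
  have "vvec n p lam \<beta> X (mat_vec n M y') = vvec n p lam \<beta> X (mat_vec n M y)"
    by (rule vvec_add_active_columns[OF assms(1,2) h shift])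
  then show ?thesis
    unfolding I_event_def using mat_vec_in_space by simp
qed

lemma emeasure_S_Int_I_event:
  assumes "design n p \<beta> X" "supp p \<beta> \<noteq> {}"
  shows "emeasure (gauss n) (S_event n p lam \<beta> X \<inter> I_event n p lam \<beta> X)
       = emeasure (gauss n) (S_event n p lam \<beta> X) * emeasure (gauss n) (I_event n p lam \<beta> X)"
proof -
  define k where "k = card (supp p \<beta>)"
  obtain h where h: "bij_betw h {..<k} (supp p \<beta>)"
    using ex_bij_betw_nat_finite[of "supp p \<beta>"] unfolding k_def atLeast0LessThan by auto
  obtain M where "k \<le> n" and "gauss_preserving n (mat_vec n M)"
    and M: "adapted_basis n k (\<lambda>j i. Fm n X i (h j)) M"
    using gauss_preserving_adapted_basis[OF lin_independent_active_columns[OF assms(1) h]] by blast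
  let ?S = "S_event n p lam \<beta> X" and ?I = "I_event n p lam \<beta> X"
  let ?E1 = "mat_vec n M -` ?S \<inter> space (gauss n)" and ?E2 = "mat_vec n M -` ?I \<inter> space (gauss n)"
  have sets: "?E1 \<in> sets (gauss n)" "?E2 \<in> sets (gauss n)"
    by (intro measurable_sets[OF measurable_mat_vec] S_event_in_sets I_event_in_sets)+
  have blocks: "gauss n = PiM ({..<k} \<union> {k..<n}) (\<lambda>_. std_normal)"
    using \<open>k \<le> n\<close> unfolding gauss_eq_PiM_std_normal by (metis ivl_disj_un_one(2))
  have first: "x \<in> ?E1 \<longleftrightarrow> y \<in> ?E1"
    if "x \<in> space (gauss n)" "y \<in> space (gauss n)" "\<forall>i\<in>{..<k}. x i = y i" for x y
    using S_event_mat_vec_first_block[OF M, of p \<beta> x y] h that by (auto simp: bij_betw_def)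
  have last: "x \<in> ?E2 \<longleftrightarrow> y \<in> ?E2"
    if "x \<in> space (gauss n)" "y \<in> space (gauss n)" "\<forall>i\<in>{k..<n}. x i = y i" for x y
    using I_event_mat_vec_last_block[OF assms _ M \<open>k \<le> n\<close>, of x y] h that by (auto simp: bij_betw_def)
  have "emeasure (gauss n) (?E1 \<inter> ?E2) = emeasure (gauss n) ?E1 * emeasure (gauss n) ?E2"
    by (rule product_prob_space.emeasure_PiM_Int_disjoint_blocks[OF product_prob_space_std_normal,
          of "{..<k}" "{k..<n}", folded blocks, OF _ _ _ sets first last]) auto
  moreover have "mat_vec n M -` (?S \<inter> ?I) \<inter> space (gauss n) = ?E1 \<inter> ?E2"
    by blast
  ultimately show ?thesis
    using \<open>gauss_preserving n (mat_vec n M)\<close> S_event_in_sets I_event_in_sets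
    by (metis emeasure_gauss_preserving_vimage sets.Int)
qed

theorem lemma1:
  fixes n p :: nat and lam :: real and X :: "nat \<Rightarrow> nat \<Rightarrow> real" and \<beta> :: "nat \<Rightarrow> real"
  assumes "design n p \<beta> X"
    and "supp p \<beta> \<noteq> {}"
    and "lam > 0"
  shows "phi n p lam X \<beta> = measure (gauss n) (S_event n p lam \<beta> X) * measure (gauss n) (I_event n p lam \<beta> X)
         \<and> measure (gauss n) (S_event n p lam \<beta> X) * measure (gauss n) (I_event n p lam \<beta> X)
             = phi n p lam X (\<lambda>j. - \<beta> j)
         \<and> (\<forall>Xs. design n p \<beta> Xs \<and> (\<forall>Y. design n p \<beta> Y \<longrightarrow> phi n p lam Y \<beta> \<le> phi n p lam Xs \<beta>)
               \<longrightarrow> (\<forall>Y. design n p (\<lambda>j. - \<beta> j) Y \<longrightarrow> phi n p lam Y (\<lambda>j. - \<beta> j) \<le> phi n p lam Xs (\<lambda>j. - \<beta> j)))"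
proof -
  have factorization: "phi n p lam X \<beta>
      = measure (gauss n) (S_event n p lam \<beta> X) * measure (gauss n) (I_event n p lam \<beta> X)"
    unfolding phi_def measure_def emeasure_S_Int_I_event[OF assms(1,2)] by (simp add: enn2real_mult)
  then show ?thesis
    by (simp add: phi_uminus)
qed

end
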